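(* (Redeemability) In the TeeRollup protocol with the challenge mechanism described in the context, if a client submits a transaction $tx$ to the sequencers, then either $tx$ is eventually executed, or the TeeRollup smart contract (TSC) is settled, in which case the deposit of every client can be redeemed on the main chain.
   Context: TeeRollup is a rollup protocol on a main chain with finality, timestamps and smart contracts. There are $n$ sequencers, each with a TEE enclave holding a registered key pair; at most $f$ TEEs are compromised and the rest are uncompromised; any sequencer may be malicious and may crash its enclave or drop messages to/from it. Uncompromised enclaves run the fixed protocol program. Rollup states are recorded on the TSC as digests $st_h=\langle h, H(st_{h-1}), R_h, H(txs_h)\rangle$, where $R_h$ is the Merkle root of the account tree (account address, i.e. public key, and balance); data availability providers store the full account tree and can supply Merkle proofs of balances. A quorum certificate (QC) is a set of valid signatures from at least $f+1$ distinct registered sequencers' enclaves. Challenge mechanism on the TSC: while the TSC is Active, a client may call StartChallenge, posting $tx$ on-chain together with collateral; this records the start time. An enclave that receives the challenge includes $tx$ in its next batch, executes it and signs it. A challenge is resolved (ResolveChallenge) only by submitting a valid QC for the execution of $tx$ before a waiting time $\tau$ elapses. If the challenge is not resolved within $\tau$, anyone may call SettleRollup, which sets the TSC to Frozen (no further state updates or deposits). While Frozen, any client can call SettleWithdraw with its account address, a signature under that account's secret key, a balance $b$ and a Merkle proof that the account has balance $b$ under the account root of the latest recorded state; upon verification the TSC refunds $b$ on the main chain to the client. *)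

theory Defs
  imports Main
begin

datatype tsc_status = Active | Frozen

definition QC ::
  "'k set \<Rightarrow> nat \<Rightarrow> ('k \<Rightarrow> 'tx \<Rightarrow> nat \<Rightarrow> bool) \<Rightarrow> 'k set \<Rightarrow> 'tx \<Rightarrow> nat \<Rightarrow> bool" where
  "QC Reg f signed S tx t \<longleftrightarrow>
     finite S \<and> S \<subseteq> Reg \<and> f + 1 \<le> card S \<and> (\<forall>k\<in>S. \<exists>t'\<le>t. signed k tx t')"

(* Returns the refunded amount (None = rejected). *)
definition settle_withdraw ::
  "('a \<Rightarrow> 's \<Rightarrow> bool) \<Rightarrow> ('h \<Rightarrow> 'a \<Rightarrow> nat \<Rightarrow> 'p \<Rightarrow> bool) \<Rightarrow>
   tsc_status \<Rightarrow> 'h \<Rightarrow> 'a \<Rightarrow> 's \<Rightarrow> nat \<Rightarrow> 'p \<Rightarrow> nat option" where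
  "settle_withdraw sig_verify merkle_verify st root a sig b prf =
     (if st = Frozen \<and> sig_verify a sig \<and> merkle_verify root a b prf then Some b else None)"

end

theory Submission
  imports Defs
begin

(* A quorum certificate has f + 1 signers, more than there are compromised
   enclaves, so some uncompromised enclave signed tx and hence executed it.
   Otherwise the challenge is never resolved and the TSC gets frozen; from
   then on the latest state root no longer changes, and since the DA providers'
   tree has that root, the Merkle proof of every recorded balance verifies in
   SettleWithdraw. *)

lemma QC_has_uncompromised_signer:
  assumes "QC Reg f signed S tx t" and "finite Comp" and "card Comp \<le> f"
  shows "\<exists>k\<in>Reg - Comp. \<exists>t'\<le>t. signed k tx t'"
proof -
  from assms(1) have S: "finite S" "S \<subseteq> Reg" "f + 1 \<le> card S" "\<forall>k\<in>S. \<exists>t'\<le>t. signed k tx t'"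
    by (auto simp: QC_def)
  have "\<not> S \<subseteq> Comp"
  proof
    assume "S \<subseteq> Comp"
    then have "card S \<le> card Comp" using assms(2) by (rule card_mono[rotated])
    with S(3) assms(3) show False by simp
  qed
  with S(2,4) show ?thesis by blast
qed

lemma settle_withdraw_refunds_balance:
  assumes "\<And>a. cverify a (csign a)"
    and "\<And>tree a b. tree a = Some b \<Longrightarrow> mverify (mroot tree) a b (mproof tree a)"
    and "tree a = Some b"
  shows "settle_withdraw cverify mverify Frozen (mroot tree) a (csign a) b (mproof tree a) = Some b"
  using assms by (simp add: settle_withdraw_def)

lemma deposits_redeemable_once_frozen:
  assumes frozen_final: "\<And>t t'. status t = Frozen \<Longrightarrow> t \<le> t' \<Longrightarrow>
           status t' = Frozen \<and> latest_root t' = latest_root t"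
    and da_consistent: "\<And>t. mroot (da_tree t) = latest_root t"
    and merkle_complete: "\<And>tree a b. tree a = Some b \<Longrightarrow> mverify (mroot tree) a b (mproof tree a)"
    and sig_complete: "\<And>a. cverify a (csign a)"
    and "status tf = Frozen"
  shows "\<exists>tf. \<forall>t\<ge>tf. status t = Frozen \<and>
            (\<forall>a b. da_tree t a = Some b \<longrightarrow>
               settle_withdraw cverify mverify (status t) (latest_root t) a (csign a) b
                 (mproof (da_tree t) a) = Some b)"
proof (intro exI allI impI conjI)
  fix t a b
  assume "tf \<le> t"
  then show frozen: "status t = Frozen"
    using frozen_final \<open>status tf = Frozen\<close> by blast
  assume "da_tree t a = Some b"
  then show "settle_withdraw cverify mverify (status t) (latest_root t) a (csign a) b
               (mproof (da_tree t) a) = Some b"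
    using settle_withdraw_refunds_balance[of cverify csign mverify mroot mproof, OF sig_complete
        merkle_complete] frozen
    by (simp add: da_consistent[symmetric])
qed

theorem theorem2:
  fixes Reg Comp :: "'k set"                         \<comment> \<open>registered / compromised enclaves\<close>
    and n f :: nat
    and signed :: "'k \<Rightarrow> 'tx \<Rightarrow> nat \<Rightarrow> bool"       \<comment> \<open>enclave k signs execution of tx at time t\<close>
    and executed :: "'tx \<Rightarrow> nat \<Rightarrow> bool"           \<comment> \<open>tx executed (by an enclave) at time t\<close>
    and status :: "nat \<Rightarrow> tsc_status"               \<comment> \<open>TSC status at main-chain time t\<close>
    and started :: "'tx \<Rightarrow> nat \<Rightarrow> bool"            \<comment> \<open>StartChallenge for tx recorded at time t\<close>
    and resolved :: "'tx \<Rightarrow> nat \<Rightarrow> bool"           \<comment> \<open>ResolveChallenge for tx accepted at time t\<close>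
    and \<tau> :: nat
    and latest_root :: "nat \<Rightarrow> 'h"                  \<comment> \<open>account root of latest recorded state\<close>
    and da_tree :: "nat \<Rightarrow> ('a \<Rightarrow> nat option)"      \<comment> \<open>full account tree held by DA providers\<close>
    and mroot :: "('a \<Rightarrow> nat option) \<Rightarrow> 'h"
    and mverify :: "'h \<Rightarrow> 'a \<Rightarrow> nat \<Rightarrow> 'p \<Rightarrow> bool"
    and mproof :: "('a \<Rightarrow> nat option) \<Rightarrow> 'a \<Rightarrow> 'p"
    and cverify :: "'a \<Rightarrow> 's \<Rightarrow> bool"
    and csign :: "'a \<Rightarrow> 's"
    and tx :: 'tx and t0 :: nat
  assumes reg: "finite Reg" "card Reg = n"
    and comp: "Comp \<subseteq> Reg" "card Comp \<le> f"
    and honest_enclave: "\<And>k tx' t. k \<in> Reg - Comp \<Longrightarrow> signed k tx' t \<Longrightarrow> \<exists>t'\<le>t. executed tx' t'"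
    and start_rule: "\<And>tx' t. started tx' t \<Longrightarrow> status t = Active"
    and resolve_rule: "\<And>tx' tr. resolved tx' tr \<Longrightarrow>
           \<exists>ts. started tx' ts \<and> ts \<le> tr \<and> tr < ts + \<tau> \<and> (\<exists>S. QC Reg f signed S tx' tr)"
    and client_challenges: "\<exists>tc\<ge>t0. status tc = Active \<longrightarrow> started tx tc"
    and settle_rollup: "\<And>tx' ts. started tx' ts \<Longrightarrow> (\<forall>tr. resolved tx' tr \<longrightarrow> \<not> tr < ts + \<tau>) \<Longrightarrow>
           \<exists>tf\<ge>ts + \<tau>. status tf = Frozen"
    and frozen_final: "\<And>t t'. status t = Frozen \<Longrightarrow> t \<le> t' \<Longrightarrow>
           status t' = Frozen \<and> latest_root t' = latest_root t"
    and da_consistent: "\<And>t. mroot (da_tree t) = latest_root t"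
    and merkle_complete: "\<And>tree a b. tree a = Some b \<Longrightarrow> mverify (mroot tree) a b (mproof tree a)"
    and sig_complete: "\<And>a. cverify a (csign a)"
  shows "(\<exists>t. executed tx t) \<or>
         (\<exists>tf. \<forall>t\<ge>tf. status t = Frozen \<and>
            (\<forall>a b. da_tree t a = Some b \<longrightarrow>
               settle_withdraw cverify mverify (status t) (latest_root t) a (csign a) b
                 (mproof (da_tree t) a) = Some b))"
proof -
  have "finite Comp"
    using comp(1) reg(1) by (rule finite_subset)
  have executed_if_resolved: "\<exists>t. executed tx t" if resolved: "resolved tx tr" for tr
  proof -
    obtain S where "QC Reg f signed S tx tr"
      using resolve_rule[OF resolved] by auto
    then have "\<exists>k\<in>Reg - Comp. \<exists>t'\<le>tr. signed k tx t'"
      using \<open>finite Comp\<close> comp(2) by (rule QC_has_uncompromised_signer)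
    then show ?thesis
      using honest_enclave by meson
  qed
  have "(\<exists>t. executed tx t) \<or> (\<exists>tf. status tf = Frozen)"
  proof -
    obtain tc where "status tc = Active \<longrightarrow> started tx tc"
      using client_challenges by blast
    then consider (frozen) "status tc = Frozen" | (challenged) "started tx tc"
      by (cases "status tc") auto
    then show ?thesis
    proof cases
      case challenged
      then show ?thesis
        using settle_rollup executed_if_resolved by blast
    qed blast
  qed
  then show ?thesis
    using deposits_redeemable_once_frozen[of status latest_root mroot da_tree mverify mproof
        cverify csign, OF frozen_final da_consistent merkle_complete sig_complete]
    by blast
qed

end
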